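(* In the setting of the context, let $(S,E,I,R)$ be the functions defined there and set $\hat S(u)=S(\varphi(u))$, $\hat E(u)=E(\varphi(u))$, $\hat I(u)=I(\varphi(u))$, $\hat R(u)=R(\varphi(u))$ for $u\in(u_\infty,u_0]$. Then for $u\in(u_\infty,u_0)$ \[ \frac{d\hat S}{du}=\frac{\hat S(u)}{u},\quad \frac{d\hat E}{du}-\frac{\delta}{u\psi(u)}\hat E(u)=-\frac{\hat S(u)}{u},\quad \frac{d\hat I}{du}-\frac{\gamma}{\beta}\frac1u=-\frac{\delta}{u\psi(u)}\hat E(u),\quad \frac{d\hat R}{du}=-\frac{\gamma}{\beta}\frac1u, \] and $\hat S(u_0)=\tilde S$, $\hat E(u_0)=\tilde E$, $\hat I(u_0)=\tilde I$, $\hat R(u_0)=\tilde R$.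
   Context: Let $\beta,\gamma,\delta>0$ be constants and $\tilde S,\tilde E,\tilde I,\tilde R$ real numbers with $N:=\tilde S+\tilde E+\tilde I+\tilde R>0$. Standing assumptions: (A1) $\tilde I>0$; (A2) $\tilde E>(\gamma/\delta)\tilde I$; (A3) $\tilde S>\delta\tilde E/(\beta\tilde I)$; (A4) $\tilde R\ge 0$ and $N>\tilde S e^{(\beta/\gamma)\tilde R}+\tilde R$. Let $\alpha$ be the unique solution in $(\tilde R,N)$ of $x=N-\tilde S e^{(\beta/\gamma)\tilde R}e^{-(\beta/\gamma)x}$, and assume (A5) $\tilde S<(\gamma/\beta)e^{(\beta/\gamma)(\alpha-\tilde R)}$. Put $u_0:=e^{-(\beta/\gamma)\tilde R}$, $u_\infty:=e^{-(\beta/\gamma)\alpha}$. Let $\psi$ be the unique function, continuous and positive on $(u_\infty,u_0]$ and $C^1$ on $(u_\infty,u_0)$, satisfying $\psi'(u)\psi(u)-\frac{\gamma+\delta}{u}\psi(u)=-\delta\,\frac{\beta N-\beta\tilde S e^{(\beta/\gamma)\tilde R}u+\gamma\log u}{u}$ on $(u_\infty,u_0)$ and $\psi(u_0)=\beta\tilde I$. Let $\varphi(u):=\int_u^{u_0}\frac{d\xi}{\xi\psi(\xi)}$; $\varphi$ is a strictly decreasing continuous bijection from $(u_\infty,u_0]$ onto $[0,\infty)$, $C^1$ on $(u_\infty,u_0)$, with inverse $\varphi^{-1}:[0,\infty)\to(u_\infty,u_0]$. For $t\ge 0$ define $S(t)=\tilde S e^{(\beta/\gamma)\tilde R}\varphi^{-1}(t)$,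 $E(t)=\tilde E e^{-\delta t}+\tilde S e^{(\beta/\gamma)\tilde R}e^{-\delta t}\int_{\varphi^{-1}(t)}^{u_0}e^{\delta\varphi(v)}dv$, $I(t)=N-\tilde S e^{(\beta/\gamma)\tilde R}\varphi^{-1}(t)+\frac{\gamma}{\beta}\log\varphi^{-1}(t)-E(t)$, $R(t)=-\frac{\gamma}{\beta}\log\varphi^{-1}(t)$; this $(S,E,I,R)$ solves $S'=-\beta SI$, $E'=\beta SI-\delta E$, $I'=\delta E-\gamma I$, $R'=\gamma I$ ($t>0$) with $(S,E,I,R)(0)=(\tilde S,\tilde E,\tilde I,\tilde R)$. *)

theory Defs
  imports "HOL-Analysis.Analysis"
begin

definition seir_phi :: "(real \<Rightarrow> real) \<Rightarrow> real \<Rightarrow> real \<Rightarrow> real" where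
  "seir_phi psi u0 u = integral {u..u0} (\<lambda>\<xi>. 1 / (\<xi> * psi \<xi>))"

definition seir_phi_inv :: "(real \<Rightarrow> real) \<Rightarrow> real \<Rightarrow> real \<Rightarrow> real \<Rightarrow> real" where
  "seir_phi_inv psi uinf u0 t = inv_into {uinf<..u0} (seir_phi psi u0) t"

definition seir_S :: "real \<Rightarrow> real \<Rightarrow> real \<Rightarrow> real \<Rightarrow> real \<Rightarrow> real \<Rightarrow> real \<Rightarrow>
    (real \<Rightarrow> real) \<Rightarrow> real \<Rightarrow> real \<Rightarrow> real" where
  "seir_S \<beta> \<gamma> \<delta> St Et It Rt psi uinf t =
     St * exp ((\<beta>/\<gamma>) * Rt) * seir_phi_inv psi uinf (exp (-(\<beta>/\<gamma>) * Rt)) t"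

definition seir_E :: "real \<Rightarrow> real \<Rightarrow> real \<Rightarrow> real \<Rightarrow> real \<Rightarrow> real \<Rightarrow> real \<Rightarrow>
    (real \<Rightarrow> real) \<Rightarrow> real \<Rightarrow> real \<Rightarrow> real" where
  "seir_E \<beta> \<gamma> \<delta> St Et It Rt psi uinf t =
     (let u0 = exp (-(\<beta>/\<gamma>) * Rt) in
      Et * exp (-\<delta> * t) + St * exp ((\<beta>/\<gamma>) * Rt) * exp (-\<delta> * t) *
        integral {seir_phi_inv psi uinf u0 t..u0} (\<lambda>v. exp (\<delta> * seir_phi psi u0 v)))"

definition seir_I :: "real \<Rightarrow> real \<Rightarrow> real \<Rightarrow> real \<Rightarrow> real \<Rightarrow> real \<Rightarrow> real \<Rightarrow>
    (real \<Rightarrow> real) \<Rightarrow> real \<Rightarrow> real \<Rightarrow> real" where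
  "seir_I \<beta> \<gamma> \<delta> St Et It Rt psi uinf t =
     (let u0 = exp (-(\<beta>/\<gamma>) * Rt); N = St + Et + It + Rt in
      N - St * exp ((\<beta>/\<gamma>) * Rt) * seir_phi_inv psi uinf u0 t
        + (\<gamma>/\<beta>) * ln (seir_phi_inv psi uinf u0 t)
        - seir_E \<beta> \<gamma> \<delta> St Et It Rt psi uinf t)"

definition seir_R :: "real \<Rightarrow> real \<Rightarrow> real \<Rightarrow> real \<Rightarrow> real \<Rightarrow> real \<Rightarrow> real \<Rightarrow>
    (real \<Rightarrow> real) \<Rightarrow> real \<Rightarrow> real \<Rightarrow> real" where
  "seir_R \<beta> \<gamma> \<delta> St Et It Rt psi uinf t =
     - (\<gamma>/\<beta>) * ln (seir_phi_inv psi uinf (exp (-(\<beta>/\<gamma>) * Rt)) t)"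

end

theory Submission
  imports Defs
begin

(* Since 1/(u psi u) > 0, phi is strictly decreasing on (u_inf, u0], so phi_inv (phi u) = u there.
   Hence S_hat u = St e^((beta/gamma) Rt) u and R_hat u = -(gamma/beta) ln u, and
   E_hat u = e^(-delta phi u) (Et + St e^((beta/gamma) Rt) int_u^u0 e^(delta phi)) is the
   variation-of-constants solution of the linear equation for E_hat, because phi' u = -1/(u psi u).
   I_hat follows from the conservation law S + E + I + R = N. *)

lemma integral_from_has_real_derivative:
  fixes g :: "real \<Rightarrow> real"
  assumes "continuous_on {a..b} g" "a < t" "t < b"
  shows "((\<lambda>x. integral {x..b} g) has_real_derivative - g t) (at t)"
proof -
  have "((\<lambda>x. integral {x..b} g) has_real_derivative - g t) (at t within {a<..<b})"
    using assms by (intro has_field_derivative_subset[OF integral_has_real_derivative']) auto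
  moreover have "at t within {a<..<b} = at t"
    using assms(2,3) by (intro at_within_open) auto
  ultimately show ?thesis by simp
qed

lemma integral_from_strict_antimono:
  fixes g :: "real \<Rightarrow> real"
  assumes "continuous_on {x..b} g" "\<And>v. v \<in> {x..b} \<Longrightarrow> 0 < g v" "x < y" "y \<le> b"
  shows "integral {y..b} g < integral {x..b} g"
proof -
  have "integral {x..b} g = integral {x..y} g + integral {y..b} g"
    using Henstock_Kurzweil_Integration.integral_combine[OF less_imp_le[OF \<open>x < y\<close>] \<open>y \<le> b\<close>
        integrable_continuous_real[OF assms(1)]] by simp
  moreover have "integral {x..y} (\<lambda>_. 0) < integral {x..y} g"
    using assms by (intro integral_less_real) (auto intro: continuous_on_subset)
  ultimately show ?thesis by simp
qed

lemma has_real_derivative_transform_Ioc: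
  fixes f g :: "real \<Rightarrow> real"
  assumes "(g has_real_derivative D) (at u)" "u \<in> {a<..<b}" "\<And>x. x \<in> {a<..b} \<Longrightarrow> f x = g x"
  shows "(f has_real_derivative D) (at u)"
  using has_field_derivative_transform_within_open[OF assms(1) open_greaterThanLessThan assms(2)]
    assms(3) by force

locale seir_time_change =
  fixes \<psi> :: "real \<Rightarrow> real" and uinf u0 :: real
  assumes uinf_nonneg: "0 \<le> uinf" and uinf_less: "uinf < u0"
    and psi_cont: "continuous_on {uinf<..u0} \<psi>"
    and psi_pos: "\<And>u. u \<in> {uinf<..u0} \<Longrightarrow> 0 < \<psi> u"
begin

lemma rate_continuous: "uinf < a \<Longrightarrow> continuous_on {a..u0} (\<lambda>\<xi>. 1 / (\<xi> * \<psi> \<xi>))"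
proof -
  assume "uinf < a"
  moreover have "\<xi> * \<psi> \<xi> \<noteq> 0" if "\<xi> \<in> {uinf<..u0}" for \<xi>
    using that uinf_nonneg psi_pos[OF that] by simp
  ultimately show ?thesis
    by (intro continuous_intros continuous_on_subset[OF psi_cont]) auto
qed

lemma rate_pos: "u \<in> {uinf<..u0} \<Longrightarrow> 0 < 1 / (u * \<psi> u)"
  using uinf_nonneg psi_pos[of u] by simp

lemma phi_strict_antimono: "strict_antimono_on {uinf<..u0} (seir_phi \<psi> u0)"
proof (rule monotone_onI)
  fix x y assume "x \<in> {uinf<..u0}" "y \<in> {uinf<..u0}" "x < y"
  then show "seir_phi \<psi> u0 y < seir_phi \<psi> u0 x"
    unfolding seir_phi_def
    by (intro integral_from_strict_antimono rate_continuous rate_pos) auto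
qed

lemma phi_inv_phi: "u \<in> {uinf<..u0} \<Longrightarrow> seir_phi_inv \<psi> uinf u0 (seir_phi \<psi> u0 u) = u"
  using phi_strict_antimono unfolding seir_phi_inv_def strict_antimono_iff_antimono
  by simp

lemma phi_continuous: "uinf < a \<Longrightarrow> continuous_on {a..u0} (seir_phi \<psi> u0)"
  unfolding seir_phi_def
  by (intro indefinite_integral_continuous_1' integrable_continuous_real rate_continuous)

lemma phi_has_real_derivative:
  "u \<in> {uinf<..<u0} \<Longrightarrow> (seir_phi \<psi> u0 has_real_derivative - (1 / (u * \<psi> u))) (at u)"
  unfolding seir_phi_def
  by (rule integral_from_has_real_derivative[OF rate_continuous, of "(uinf + u) / 2"]) auto

lemma exp_integral_has_real_derivative:
  "u \<in> {uinf<..<u0} \<Longrightarrow> ((\<lambda>u. integral {u..u0} (\<lambda>v. exp (\<delta> * seir_phi \<psi> u0 v)))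
     has_real_derivative - exp (\<delta> * seir_phi \<psi> u0 u)) (at u)"
  by (rule integral_from_has_real_derivative[of "(uinf + u) / 2"])
    (auto intro!: continuous_intros phi_continuous)

lemma variation_of_constants_has_real_derivative:
  fixes \<delta> E0 c :: real
  defines "E \<equiv> \<lambda>u. exp (- \<delta> * seir_phi \<psi> u0 u) *
                      (E0 + c * integral {u..u0} (\<lambda>v. exp (\<delta> * seir_phi \<psi> u0 v)))"
  assumes "u \<in> {uinf<..<u0}"
  shows "(E has_real_derivative \<delta> / (u * \<psi> u) * E u - c) (at u)"
proof -
  have "exp (- \<delta> * seir_phi \<psi> u0 u) * exp (\<delta> * seir_phi \<psi> u0 u) = 1"
    by (simp flip: exp_add)
  then show ?thesis
    unfolding E_def using assms(2)
    by (auto intro!: derivative_eq_intros phi_has_real_derivative exp_integral_has_real_derivative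
        simp: algebra_simps)
qed

end

lemma seir_I_conservation:
  "seir_I \<beta> \<gamma> \<delta> St Et It Rt \<psi> uinf t = (St + Et + It + Rt)
     - seir_S \<beta> \<gamma> \<delta> St Et It Rt \<psi> uinf t - seir_E \<beta> \<gamma> \<delta> St Et It Rt \<psi> uinf t
     - seir_R \<beta> \<gamma> \<delta> St Et It Rt \<psi> uinf t"
  unfolding seir_I_def seir_S_def seir_R_def Let_def by simp

locale seir_hat = seir_time_change \<psi> uinf u0
  for \<psi> :: "real \<Rightarrow> real" and uinf u0 :: real +
  fixes \<beta> \<gamma> \<delta> St Et It Rt :: real
  assumes rates_pos: "0 < \<beta>" "0 < \<gamma>"
    and u0_eq: "u0 = exp (-(\<beta>/\<gamma>) * Rt)"
begin

abbreviation "S_hat u \<equiv> seir_S \<beta> \<gamma> \<delta> St Et It Rt \<psi> uinf (seir_phi \<psi> u0 u)"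
abbreviation "E_hat u \<equiv> seir_E \<beta> \<gamma> \<delta> St Et It Rt \<psi> uinf (seir_phi \<psi> u0 u)"
abbreviation "I_hat u \<equiv> seir_I \<beta> \<gamma> \<delta> St Et It Rt \<psi> uinf (seir_phi \<psi> u0 u)"
abbreviation "R_hat u \<equiv> seir_R \<beta> \<gamma> \<delta> St Et It Rt \<psi> uinf (seir_phi \<psi> u0 u)"

lemma S_hat_eq: "u \<in> {uinf<..u0} \<Longrightarrow> S_hat u = St * exp ((\<beta>/\<gamma>) * Rt) * u"
  unfolding seir_S_def u0_eq[symmetric] by (simp add: phi_inv_phi)

lemma R_hat_eq: "u \<in> {uinf<..u0} \<Longrightarrow> R_hat u = - (\<gamma>/\<beta>) * ln u"
  unfolding seir_R_def u0_eq[symmetric] by (simp add: phi_inv_phi)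

lemma E_hat_eq:
  "u \<in> {uinf<..u0} \<Longrightarrow> E_hat u = exp (- \<delta> * seir_phi \<psi> u0 u) *
     (Et + St * exp ((\<beta>/\<gamma>) * Rt) * integral {u..u0} (\<lambda>v. exp (\<delta> * seir_phi \<psi> u0 v)))"
  unfolding seir_E_def Let_def u0_eq[symmetric] by (simp add: phi_inv_phi algebra_simps)

lemma S_hat_has_real_derivative:
  assumes "u \<in> {uinf<..<u0}"
  shows "(S_hat has_real_derivative S_hat u / u) (at u)"
proof (rule has_real_derivative_transform_Ioc[OF _ assms S_hat_eq])
  show "((\<lambda>u. St * exp ((\<beta>/\<gamma>) * Rt) * u) has_real_derivative S_hat u / u) (at u)"
    using assms uinf_nonneg S_hat_eq[of u] by (auto intro!: derivative_eq_intros)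
qed

lemma R_hat_has_real_derivative:
  assumes "u \<in> {uinf<..<u0}"
  shows "(R_hat has_real_derivative - (\<gamma>/\<beta>) * (1/u)) (at u)"
proof (rule has_real_derivative_transform_Ioc[OF _ assms R_hat_eq])
  show "((\<lambda>u. - (\<gamma>/\<beta>) * ln u) has_real_derivative - (\<gamma>/\<beta>) * (1/u)) (at u)"
    using assms uinf_nonneg rates_pos by (auto intro!: derivative_eq_intros)
qed

lemma E_hat_has_real_derivative:
  assumes "u \<in> {uinf<..<u0}"
  shows "(E_hat has_real_derivative \<delta> / (u * \<psi> u) * E_hat u - S_hat u / u) (at u)"
proof (rule has_real_derivative_transform_Ioc[OF _ assms E_hat_eq])
  have "S_hat u / u = St * exp ((\<beta>/\<gamma>) * Rt)"
    using assms uinf_nonneg by (simp add: S_hat_eq)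
  then show "((\<lambda>u. exp (- \<delta> * seir_phi \<psi> u0 u) * (Et + St * exp ((\<beta>/\<gamma>) * Rt) *
      integral {u..u0} (\<lambda>v. exp (\<delta> * seir_phi \<psi> u0 v))))
      has_real_derivative \<delta> / (u * \<psi> u) * E_hat u - S_hat u / u) (at u)"
    using variation_of_constants_has_real_derivative[OF assms] assms by (simp add: E_hat_eq)
qed

lemma I_hat_has_real_derivative:
  assumes "u \<in> {uinf<..<u0}"
  shows "(I_hat has_real_derivative (\<gamma>/\<beta>) * (1/u) - \<delta> / (u * \<psi> u) * E_hat u) (at u)"
  unfolding seir_I_conservation using assms
  by (auto intro!: derivative_eq_intros S_hat_has_real_derivative E_hat_has_real_derivative
      R_hat_has_real_derivative)

lemma hat_initial_values:
  "S_hat u0 = St" "E_hat u0 = Et" "I_hat u0 = It" "R_hat u0 = Rt"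
proof -
  have u0: "u0 \<in> {uinf<..u0}" and phi0: "seir_phi \<psi> u0 u0 = 0"
    using uinf_less by (auto simp: seir_phi_def)
  show S0: "S_hat u0 = St"
    using S_hat_eq[OF u0] by (simp add: u0_eq flip: exp_add)
  show E0: "E_hat u0 = Et"
    using E_hat_eq[OF u0] by (simp add: phi0)
  show R0: "R_hat u0 = Rt"
    using R_hat_eq[OF u0] rates_pos by (simp add: u0_eq)
  show "I_hat u0 = It"
    unfolding seir_I_conservation S0 E0 R0 by simp
qed

end

theorem theorem5:
  fixes \<beta> \<gamma> \<delta> St Et It Rt \<alpha> :: real and \<psi> :: "real \<Rightarrow> real"
  defines "N \<equiv> St + Et + It + Rt"
  defines "u0 \<equiv> exp (-(\<beta>/\<gamma>) * Rt)"
  defines "uinf \<equiv> exp (-(\<beta>/\<gamma>) * \<alpha>)"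
  defines "Sh \<equiv> (\<lambda>u. seir_S \<beta> \<gamma> \<delta> St Et It Rt \<psi> uinf (seir_phi \<psi> u0 u))"
  defines "Eh \<equiv> (\<lambda>u. seir_E \<beta> \<gamma> \<delta> St Et It Rt \<psi> uinf (seir_phi \<psi> u0 u))"
  defines "Ih \<equiv> (\<lambda>u. seir_I \<beta> \<gamma> \<delta> St Et It Rt \<psi> uinf (seir_phi \<psi> u0 u))"
  defines "Rh \<equiv> (\<lambda>u. seir_R \<beta> \<gamma> \<delta> St Et It Rt \<psi> uinf (seir_phi \<psi> u0 u))"
  assumes pos: "\<beta> > 0" "\<gamma> > 0" "\<delta> > 0"
    and N_pos: "N > 0"
    and A1: "It > 0"
    and A2: "Et > (\<gamma>/\<delta>) * It"
    and A3: "St > \<delta> * Et / (\<beta> * It)"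
    and A4: "Rt \<ge> 0" "N > St * exp ((\<beta>/\<gamma>) * Rt) + Rt"
    and alpha: "Rt < \<alpha>" "\<alpha> < N"
      "\<alpha> = N - St * exp ((\<beta>/\<gamma>) * Rt) * exp (-(\<beta>/\<gamma>) * \<alpha>)"
    and A5: "St < (\<gamma>/\<beta>) * exp ((\<beta>/\<gamma>) * (\<alpha> - Rt))"
    and psi_cont: "continuous_on {uinf<..u0} \<psi>"
    and psi_pos: "\<forall>u\<in>{uinf<..u0}. \<psi> u > 0"
    and psi_C1: "\<exists>\<psi>'. continuous_on {uinf<..<u0} \<psi>' \<and>
                   (\<forall>u\<in>{uinf<..<u0}. (\<psi> has_real_derivative \<psi>' u) (at u) \<and>
                      \<psi>' u * \<psi> u - (\<gamma> + \<delta>) / u * \<psi> u =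
                        - \<delta> * (\<beta> * N - \<beta> * St * exp ((\<beta>/\<gamma>) * Rt) * u + \<gamma> * ln u) / u)"
    and psi_init: "\<psi> u0 = \<beta> * It"
  shows "(\<forall>u\<in>{uinf<..<u0}.
            (Sh has_real_derivative Sh u / u) (at u) \<and>
            (\<exists>D. (Eh has_real_derivative D) (at u) \<and> D - \<delta> / (u * \<psi> u) * Eh u = - Sh u / u) \<and>
            (\<exists>D. (Ih has_real_derivative D) (at u) \<and> D - (\<gamma>/\<beta>) * (1/u) = - \<delta> / (u * \<psi> u) * Eh u) \<and>
            (Rh has_real_derivative - (\<gamma>/\<beta>) * (1/u)) (at u))
         \<and> Sh u0 = St \<and> Eh u0 = Et \<and> Ih u0 = It \<and> Rh u0 = Rt"
proof -
  have "(\<beta>/\<gamma>) * Rt < (\<beta>/\<gamma>) * \<alpha>"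
    using pos alpha(1) by (intro mult_strict_left_mono) simp_all
  then interpret seir_hat \<psi> uinf u0 \<beta> \<gamma> \<delta> St Et It Rt
    using pos psi_cont psi_pos by unfold_locales (auto simp: uinf_def u0_def)
  have E_deriv: "\<exists>D. (E_hat has_real_derivative D) (at u) \<and>
      D - \<delta> / (u * \<psi> u) * E_hat u = - S_hat u / u" if "u \<in> {uinf<..<u0}" for u
    using E_hat_has_real_derivative[OF that] by (intro exI conjI, assumption) simp
  have I_deriv: "\<exists>D. (I_hat has_real_derivative D) (at u) \<and>
      D - (\<gamma>/\<beta>) * (1/u) = - \<delta> / (u * \<psi> u) * E_hat u" if "u \<in> {uinf<..<u0}" for u
    using I_hat_has_real_derivative[OF that] by (intro exI conjI, assumption) simp
  show ?thesis
    unfolding Sh_def Eh_def Ih_def Rh_def N_def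
    using S_hat_has_real_derivative E_deriv I_deriv R_hat_has_real_derivative hat_initial_values
    by simp
qed

end
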